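(* Let $Y_1=1$ and, for $n\ge2$, $Y_n=\lfloor (n+I)/2\rfloor$ where $I$ is a Bernoulli$(1/2)$ random variable, and let $X_n$ be the number of rounds of the associated leader election process ($X_1=0$, $X_n\overset d=X_{Y_n}+1$ with independent $Y_n$). Then for all $n\ge1$ and all $k\in\mathbb Z$, $\Pr(X_n\le k)=F(k-\log_2 n)$ exactly, where $F(x)=0$ for $x\le-1$, $F(x)=2-2^{-x}$ for $-1\le x\le0$, $F(x)=1$ for $x\ge0$. Moreover $\mathbb E X_n=\log_2 n+\phi(n)$ exactly for $n\ge1$, where $\phi(2^x)=2^{x-\lfloor x\rfloor}-(x-\lfloor x\rfloor)-1$.
   Context: The process: starting with $N_0=n$ players, $N_{k+1}$ has the law of $Y_{N_k}$ given the past, and $X_n=\min\{k:N_k=1\}$. *)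

theory Defs
  imports "HOL-Probability.Probability"
begin

definition Ylaw :: "nat \<Rightarrow> nat pmf" where
  "Ylaw n = (if n = 1 then return_pmf 1
             else map_pmf (\<lambda>b. (n + of_bool b) div 2) (bernoulli_pmf (1/2)))"

lemma Ylaw_less: "2 \<le> n \<Longrightarrow> m \<in> set_pmf (Ylaw n) \<Longrightarrow> m < n"
  by (auto simp: Ylaw_def)

text \<open>Law of X_n: X_1 = 0 and X_n =d X_{Y_n} + 1 (Y_n independent).
  The value at n = 0 is an irrelevant convention.\<close>
function Xlaw :: "nat \<Rightarrow> nat pmf" where
  "Xlaw n = (if n \<le> 1 then return_pmf 0
             else bind_pmf (Ylaw n) (\<lambda>m. map_pmf Suc (Xlaw m)))"
  by auto
termination
  by (relation "Wellfounded.measure id") (auto intro: Ylaw_less)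

definition F :: "real \<Rightarrow> real" where
  "F x = (if x \<le> -1 then 0 else if x \<le> 0 then 2 - 2 powr (-x) else 1)"

definition phi :: "nat \<Rightarrow> real" where
  "phi n = (let x = log 2 (real n); t = x - real_of_int \<lfloor>x\<rfloor> in 2 powr t - t - 1)"

end

theory Submission
  imports Defs
begin

(*
  Write G n k = max 0 (min 1 (2 - n / 2^k)) for the clamped piecewise
  linear profile.  Unfolding the recursion once, P(X_n \<le> k+1) is the average of
  P(X_{ceil(n/2)} \<le> k) and P(X_{floor(n/2)} \<le> k); G satisfies the same
  averaging identity, because ceil(n/2)/2^k and floor(n/2)/2^k never lie on
  different sides of a kink (1 or 2) of the profile.  Strong induction on n gives
  P(X_n \<le> k) = G n k, and G n k = F (k - log2 n) by a change of variables.
  For 2^m \<le> n < 2^(m+1) the profile is 0 below m and 1 from m+1 on, so X_n is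
  supported on {m, m+1} with P(X_n \<le> m) = 2 - n/2^m; hence
  E X_n = m - 1 + n/2^m, which is exactly log2 n + phi n.
*)

text \<open>The defining equation of Xlaw would make the simplifier loop; it is unfolded
  only explicitly.\<close>
declare Xlaw.simps[simp del]

lemma prob_bind_bernoulli_half:
  fixes f :: "bool \<Rightarrow> 'a pmf"
  shows "measure_pmf.prob (bind_pmf (bernoulli_pmf (1/2)) f) A
     = (measure_pmf.prob (f True) A + measure_pmf.prob (f False) A) / 2"
proof -
  let ?a = "measure_pmf.prob (f True) A" and ?b = "measure_pmf.prob (f False) A"
  have "ennreal ((?a + ?b) / 2) = (ennreal ?a + ennreal ?b) * inverse 2"
    by (simp add: divide_ennreal[symmetric] ennreal_plus divide_ennreal_def)
  then have "ennreal (measure_pmf.prob (bind_pmf (bernoulli_pmf (1/2)) f) A)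
      = ennreal ((?a + ?b) / 2)"
    by (simp add: measure_pmf.emeasure_eq_measure[symmetric] emeasure_bind_pmf
        nn_integral_bernoulli_pmf) (simp add: measure_pmf.emeasure_eq_measure distrib_right)
  then show ?thesis
    by (subst (asm) ennreal_inj) auto
qed

lemma expectation_two_point:
  fixes p :: "nat pmf"
  assumes supp: "set_pmf p \<subseteq> {m, Suc m}"
  shows "measure_pmf.expectation p real = real (Suc m) - measure_pmf.prob p {x. x \<le> m}"
proof -
  have total: "pmf p m + pmf p (Suc m) = 1"
    using sum_pmf_eq_1[of "{m, Suc m}" p] supp by simp
  have "{x. x \<le> m} \<inter> set_pmf p = {m} \<inter> set_pmf p"
    using supp by auto
  then have below: "measure_pmf.prob p {x. x \<le> m} = pmf p m"
    by (metis measure_Int_set_pmf measure_pmf_single)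
  have "measure_pmf.expectation p real = real m * pmf p m + real (Suc m) * pmf p (Suc m)"
    using supp by (subst integral_measure_pmf_real[of "{m, Suc m}"]) auto
  also have "\<dots> = real m * (pmf p m + pmf p (Suc m)) + pmf p (Suc m)"
    by (simp add: algebra_simps)
  finally show ?thesis
    using total below by simp
qed

lemma set_pmf_le_of_cdf_one:
  fixes p :: "nat pmf"
  assumes "measure_pmf.prob p {x. x \<le> b} = 1" "x \<in> set_pmf p"
  shows "x \<le> b"
proof -
  have "measure_pmf.prob p (UNIV - {x. x \<le> b}) = 0"
    using assms(1) measure_pmf.prob_compl[of "{x. x \<le> b}" p] by simp
  then show ?thesis
    using assms(2) by (auto simp: measure_pmf_zero_iff)
qed

lemma set_pmf_gt_of_cdf_zero:
  fixes p :: "nat pmf"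
  assumes "measure_pmf.prob p {x. x \<le> a} = 0" "x \<in> set_pmf p"
  shows "a < x"
  using assms by (auto simp: measure_pmf_zero_iff)

text \<open>The candidate distribution function, before the substitution k - log2 n.\<close>
definition G :: "nat \<Rightarrow> nat \<Rightarrow> real" where
  "G n k = max 0 (min 1 (2 - real n / 2^k))"

lemma clamp_average:
  fixes x y :: real
  assumes "x \<le> y" "\<not> (x < 1 \<and> 1 < y)" "\<not> (x < 2 \<and> 2 < y)"
  shows "(max 0 (min 1 (2 - y)) + max 0 (min 1 (2 - x))) / 2 = max 0 (min 1 (2 - (x+y)/2))"
  using assms unfolding max_def min_def by (auto split: if_split) (auto simp: field_simps)

lemma G_step:
  assumes "n \<ge> 2"
  shows "(G ((n+1) div 2) k + G (n div 2) k) / 2 = G n (Suc k)"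
proof (cases "even n")
  case True
  then obtain r where "n = 2*r" by blast
  then show ?thesis unfolding G_def by (simp add: field_simps)
next
  case False
  then obtain r where r: "n = 2*r+1" using oddE by blast
  define a :: real where "a = 2^k"
  have a_pos: "a > 0" unfolding a_def by simp
  obtain j where j: "a = real j" "j \<ge> 1" unfolding a_def
    by (metis of_nat_numeral of_nat_power one_le_numeral one_le_power)
  have "r + 1 \<le> j \<or> (j \<le> r \<and> r + 1 \<le> 2*j) \<or> 2*j \<le> r" by linarith
  then have cases: "real r + 1 \<le> a \<or> (a \<le> real r \<and> real r + 1 \<le> 2*a) \<or> 2*a \<le> real r"
    unfolding j by linarith
  have ordered: "real r / a \<le> (real r + 1) / a"
    using a_pos by (simp add: divide_right_mono)
  have kink1: "\<not> (real r / a < 1 \<and> 1 < (real r + 1) / a)"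
    and kink2: "\<not> (real r / a < 2 \<and> 2 < (real r + 1) / a)"
    using cases a_pos by (auto simp: field_simps)
  have mid: "(real r / a + (real r + 1) / a) / 2 = real n / 2^Suc k"
    using a_pos by (simp add: r a_def field_simps)
  have "(n+1) div 2 = r+1" "n div 2 = r" using r by auto
  then show ?thesis
    using clamp_average[OF ordered kink1 kink2]
    unfolding G_def mid[symmetric] a_def by (simp add: add.commute)
qed

lemma Xlaw_unfold:
  assumes "n \<ge> 2"
  shows "Xlaw n = bind_pmf (bernoulli_pmf (1/2)) (\<lambda>b. map_pmf Suc (Xlaw ((n + of_bool b) div 2)))"
  using assms by (subst Xlaw.simps) (simp add: Ylaw_def bind_map_pmf o_def)

lemma Xlaw_cdf_G:
  assumes "n \<ge> 1"
  shows "measure_pmf.prob (Xlaw n) {x. x \<le> k} = G n k"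
  using assms
proof (induction n arbitrary: k rule: less_induct)
  case (less n)
  show ?case
  proof (cases "n = 1")
    case True
    then have "Xlaw n = return_pmf 0" by (simp add: Xlaw.simps)
    moreover have "(1::real) / 2^k \<le> 1" by simp
    ultimately show ?thesis using True unfolding G_def by simp
  next
    case False
    with less.prems have n2: "n \<ge> 2" by simp
    have avg: "measure_pmf.prob (Xlaw n) {x. x \<le> k} =
      (measure_pmf.prob (Xlaw ((n+1) div 2)) (Suc -` {x. x \<le> k})
       + measure_pmf.prob (Xlaw (n div 2)) (Suc -` {x. x \<le> k})) / 2"
      unfolding Xlaw_unfold[OF n2] prob_bind_bernoulli_half by simp
    show ?thesis
    proof (cases k)
      case 0
      have "real n \<ge> 2" using n2 by simp
      moreover have "Suc -` {x. x \<le> k} = {}" using 0 by auto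
      ultimately show ?thesis unfolding avg by (simp add: G_def 0)
    next
      case (Suc k')
      have preimage: "Suc -` {x. x \<le> k} = {x. x \<le> k'}" using Suc by auto
      have IH: "measure_pmf.prob (Xlaw ((n+1) div 2)) {x. x \<le> k'} = G ((n+1) div 2) k'"
               "measure_pmf.prob (Xlaw (n div 2)) {x. x \<le> k'} = G (n div 2) k'"
        using n2 by (auto intro!: less.IH)
      have "measure_pmf.prob (Xlaw n) {x. x \<le> k} = G n (Suc k')"
        unfolding avg preimage IH G_step[OF n2] ..
      then show ?thesis using Suc by simp
    qed
  qed
qed

lemma F_neg_log:
  assumes q: "q > 0"
  shows "F (- log 2 q) = max 0 (min 1 (2 - q))"
proof -
  have "- log 2 q \<le> -1 \<longleftrightarrow> 2 \<le> q" using le_log_iff[of 2 q 1] q by auto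
  moreover have "- log 2 q \<le> 0 \<longleftrightarrow> 1 \<le> q" using le_log_iff[of 2 q 0] q by auto
  ultimately show ?thesis unfolding F_def using q by auto
qed

lemma G_eq_F:
  assumes "n \<ge> 1"
  shows "G n k = F (real k - log 2 (real n))"
proof -
  define q where "q = real n / 2^k"
  have q: "q > 0" using assms by (simp add: q_def)
  have "real n = q * 2^k" by (simp add: q_def)
  then have "real k - log 2 (real n) = - log 2 q"
    using q by (simp add: log_mult log_nat_power)
  then show ?thesis using F_neg_log[OF q] by (simp add: G_def q_def)
qed

lemma Xlaw_cdf:
  assumes n: "n \<ge> 1"
  shows "measure_pmf.prob (Xlaw n) {x. int x \<le> k} = F (real_of_int k - log 2 (real n))"
proof (cases "k < 0")
  case True
  have "log 2 (real n) \<ge> 0" using n by simp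
  with True show ?thesis unfolding F_def by simp
next
  case False
  then obtain k' where k: "k = int k'" by (metis nonneg_int_cases not_less)
  then have "{x. int x \<le> k} = {x. x \<le> k'}" by auto
  then show ?thesis using Xlaw_cdf_G[OF n, of k'] G_eq_F[OF n, of k'] k by simp
qed

lemma Xlaw_support:
  assumes n: "n \<ge> 1" and m: "2^m \<le> n" "n < 2^Suc m"
  shows "set_pmf (Xlaw n) \<subseteq> {m, Suc m}"
proof
  fix x assume x: "x \<in> set_pmf (Xlaw n)"
  have "real n < 2^Suc m" using m(2) by (metis of_nat_less_iff of_nat_numeral of_nat_power)
  then have "measure_pmf.prob (Xlaw n) {x. x \<le> Suc m} = 1"
    unfolding Xlaw_cdf_G[OF n] G_def by simp
  then have upper: "x \<le> Suc m" using x by (rule set_pmf_le_of_cdf_one)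
  have lower: "m \<le> x"
  proof (cases m)
    case (Suc m')
    have "(2::real)^m \<le> real n" using m(1) by (metis of_nat_le_iff of_nat_numeral of_nat_power)
    then have "real n / 2^m' \<ge> 2" using Suc by (simp add: field_simps)
    then have "measure_pmf.prob (Xlaw n) {x. x \<le> m'} = 0"
      unfolding Xlaw_cdf_G[OF n] G_def by simp
    then show ?thesis using x Suc set_pmf_gt_of_cdf_zero by fastforce
  qed simp
  show "x \<in> {m, Suc m}" using upper lower by auto
qed

lemma Xlaw_expectation_dyadic:
  assumes n: "n \<ge> 1" and m: "2^m \<le> n" "n < 2^Suc m"
  shows "measure_pmf.expectation (Xlaw n) real = real m - 1 + real n / 2^m"
proof -
  have "(2::real)^m \<le> real n" "real n < 2^Suc m"
    using m by (metis of_nat_le_iff of_nat_numeral of_nat_power,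
                metis of_nat_less_iff of_nat_numeral of_nat_power)
  then have "1 \<le> real n / 2^m" "real n / 2^m < 2" by (simp_all add: field_simps)
  then have "measure_pmf.prob (Xlaw n) {x. x \<le> m} = 2 - real n / 2^m"
    unfolding Xlaw_cdf_G[OF n] G_def by simp
  then show ?thesis
    using expectation_two_point[OF Xlaw_support[OF assms]] by simp
qed

lemma log_plus_phi_dyadic:
  assumes n: "n \<ge> 1" and m: "2^m \<le> n" "n < 2^Suc m"
  shows "log 2 (real n) + phi n = real m - 1 + real n / 2^m"
proof -
  define q where "q = real n / 2^m"
  have q: "q > 0" using n by (simp add: q_def)
  have "real n = q * 2^m" by (simp add: q_def)
  then have lg: "log 2 (real n) = log 2 q + real m"
    using q by (simp add: log_mult log_nat_power)
  have "\<lfloor>log 2 (real n)\<rfloor> = int m"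
    using floor_log_nat_eq_powr_iff[of 2 n m] m n by simp
  then have "phi n = q - log 2 q - 1"
    unfolding phi_def Let_def lg using q by simp
  then show ?thesis using lg by (simp add: q_def)
qed

theorem mainTheorem6:
  shows "(\<forall>n::nat. n \<ge> 1 \<longrightarrow> (\<forall>k::int.
            measure_pmf.prob (Xlaw n) {x. int x \<le> k} = F (real_of_int k - log 2 (real n))))
       \<and> (\<forall>n::nat. n \<ge> 1 \<longrightarrow>
            measure_pmf.expectation (Xlaw n) real = log 2 (real n) + phi n)"
proof (intro conjI allI impI)
  fix n :: nat and k :: int
  assume "n \<ge> 1"
  then show "measure_pmf.prob (Xlaw n) {x. int x \<le> k} = F (real_of_int k - log 2 (real n))"
    by (rule Xlaw_cdf)
next
  fix n :: nat
  assume n: "n \<ge> 1"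
  then obtain m where m: "2^m \<le> n" "n < 2^Suc m"
    using ex_power_ivl1[of 2 n] by auto
  show "measure_pmf.expectation (Xlaw n) real = log 2 (real n) + phi n"
    using Xlaw_expectation_dyadic[OF n m] log_plus_phi_dyadic[OF n m] by simp
qed

end
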